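(* For each $n\ge1$ there is a bijection $\psi$ from the set of plane trees with $n$ edges to $\mathfrak S_n(132)$ such that, for every such tree $T$ and $\pi=\psi(T)$: (1) the number of young leaves of $T$ equals the number of double descents of the permutation $(n+1)\pi=(n+1,\pi_1,\dots,\pi_n)$; (2) the number of old leaves of $T$ equals the number of ascending runs of the permutation $\pi(n+1)=(\pi_1,\dots,\pi_n,n+1)$.
   Context: A plane tree is a rooted tree in which the children of each vertex are linearly ordered. A leaf is a vertex with no children; the one-vertex tree has no leaves. A leaf is old if it is the leftmost child of its parent, young otherwise. $\mathfrak S_n(132)$ is the set of permutations of $\{1,\dots,n\}$ with no indices $a<b<c$ such that $\pi_a<\pi_c<\pi_b$. For a sequence $\sigma$, a double descent is an index $i$ with $\sigma_i>\sigma_{i+1}>\sigma_{i+2}$, a double ascent is an index $i$ with $\sigma_i<\sigma_{i+1}<\sigma_{i+2}$, and an ascending run is a maximal increasing sequence $\sigma_i<\sigma_{i+1}<\cdots<\sigma_{i+k}$ of consecutive entries with $k\ge1$. *)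

theory Defs
  imports Main
begin

datatype ptree = Node "ptree list"

fun children :: "ptree \<Rightarrow> ptree list" where
  "children (Node ts) = ts"

fun edges :: "ptree \<Rightarrow> nat" where
  "edges (Node ts) = length ts + sum_list (map edges ts)"

text \<open>Old leaves: leaves that are the leftmost child of their parent.
  (The root is never a leaf, since leaves are children.)\<close>
fun old_leaves :: "ptree \<Rightarrow> nat" where
  "old_leaves (Node ts) =
     (case ts of [] \<Rightarrow> 0 | t # _ \<Rightarrow> (if children t = [] then 1 else 0))
     + sum_list (map old_leaves ts)"

fun young_leaves :: "ptree \<Rightarrow> nat" where
  "young_leaves (Node ts) =
     length (filter (\<lambda>t. children t = []) (drop 1 ts))
     + sum_list (map young_leaves ts)"

definition is_perm :: "nat \<Rightarrow> nat list \<Rightarrow> bool" where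
  "is_perm n xs \<longleftrightarrow> length xs = n \<and> distinct xs \<and> set xs = {1..n}"

definition avoids132 :: "nat list \<Rightarrow> bool" where
  "avoids132 xs \<longleftrightarrow> \<not> (\<exists>a b c. a < b \<and> b < c \<and> c < length xs \<and>
                          xs ! a < xs ! c \<and> xs ! c < xs ! b)"

definition S132 :: "nat \<Rightarrow> nat list set" where
  "S132 n = {xs. is_perm n xs \<and> avoids132 xs}"

definition double_descents :: "nat list \<Rightarrow> nat" where
  "double_descents s = card {i. i + 2 < length s \<and> s ! i > s ! (i+1) \<and> s ! (i+1) > s ! (i+2)}"

definition asc_runs :: "nat list \<Rightarrow> nat" where
  "asc_runs s = card {(i, j). i < j \<and> j < length s \<and>
       (\<forall>k. i \<le> k \<and> k < j \<longrightarrow> s ! k < s ! (k+1)) \<and>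
       (i = 0 \<or> \<not> s ! (i - 1) < s ! i) \<and>
       (j + 1 = length s \<or> \<not> s ! j < s ! (j+1))}"

end

theory Submission
  imports Defs
begin

(*
  Cutting off the last subtree t of the root splits a plane tree T with n edges into t and the
  remaining tree T'.  T is sent to max_join (perm_of_tree t) (perm_of_tree T'): the word of t,
  shifted above the word of T', with the maximum n in between.  In a 132-avoider every entry
  left of n exceeds every entry right of n, so each one splits uniquely in this way, which makes
  perm_of_tree a bijection.
  The new last child t is a young leaf iff t is a single vertex and T' is not; with the sentinel
  n + 1 in front, this is exactly when n + 1 > n > (first entry of the word of T') is a new
  double descent.  It is an old leaf iff both are single vertices, exactly when n < n + 1 is a
  new ascending run.  Otherwise n + 1 and n act as the sentinels of the two parts, so both
  statistics are additive.
*)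

definition max_join :: "nat list \<Rightarrow> nat list \<Rightarrow> nat list" where
  "max_join \<sigma> \<pi> = map (\<lambda>x. x + length \<pi>) \<sigma> @ (length \<sigma> + length \<pi> + 1) # \<pi>"

fun perm_of_tree :: "ptree \<Rightarrow> nat list" where
  "perm_of_tree (Node ts) = foldl (\<lambda>\<pi> t. max_join (perm_of_tree t) \<pi>) [] ts"

lemma ptree_snoc_induct [case_names Leaf snoc]:
  assumes "P (Node [])"
    and "\<And>ts t. P (Node ts) \<Longrightarrow> P t \<Longrightarrow> P (Node (ts @ [t]))"
  shows "P T"
proof (induction T)
  case (Node ts)
  then show ?case
    by (induction ts rule: rev_induct) (auto intro: assms)
qed

lemma length_max_join [simp]: "length (max_join \<sigma> \<pi>) = length \<sigma> + length \<pi> + 1"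
  by (simp add: max_join_def)

lemma perm_of_tree_Leaf [simp]: "perm_of_tree (Node []) = []"
  by simp

lemma perm_of_tree_snoc [simp]:
  "perm_of_tree (Node (ts @ [t])) = max_join (perm_of_tree t) (perm_of_tree (Node ts))"
  by simp

declare perm_of_tree.simps [simp del]

lemma length_perm_of_tree [simp]: "length (perm_of_tree T) = edges T"
  by (induction T rule: ptree_snoc_induct) simp_all

lemma perm_of_tree_eq_Nil_iff: "perm_of_tree T = [] \<longleftrightarrow> children T = []"
  by (cases T) (auto simp flip: length_0_conv)

section \<open>132-avoiding permutations\<close>

lemma is_perm_if_subset:
  assumes "distinct xs" "set xs \<subseteq> {1..length xs}"
  shows "is_perm (length xs) xs"
  using assms card_subset_eq[of "{1..length xs}" "set xs"]
  by (simp add: is_perm_def distinct_card)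

lemma is_perm_max_join:
  assumes "is_perm a \<sigma>" "is_perm b \<pi>"
  shows "is_perm (a + b + 1) (max_join \<sigma> \<pi>)"
proof -
  have \<sigma>: "distinct \<sigma>" "set \<sigma> = {1..a}" "length \<sigma> = a"
    and \<pi>: "distinct \<pi>" "set \<pi> = {1..b}" "length \<pi> = b"
    using assms by (simp_all add: is_perm_def)
  have "distinct (map (\<lambda>x. x + b) \<sigma>)"
    using \<sigma>(1) by (simp add: distinct_map)
  moreover have "set (map (\<lambda>x. x + b) \<sigma>) \<subseteq> {b + 1..a + b}"
    using \<sigma>(2) by auto
  ultimately have "distinct (max_join \<sigma> \<pi>)" "set (max_join \<sigma> \<pi>) \<subseteq> {1..a + b + 1}"
    using \<sigma>(3) \<pi> by (auto simp: max_join_def)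
  then show ?thesis
    using is_perm_if_subset[of "max_join \<sigma> \<pi>"] \<sigma>(3) \<pi>(3) by simp
qed

lemma avoids132_shift [simp]: "avoids132 (map (\<lambda>x. x + c) xs) \<longleftrightarrow> avoids132 xs"
proof -
  let ?ys = "map (\<lambda>x. x + c) xs"
  have "?ys ! i < ?ys ! k \<and> ?ys ! k < ?ys ! j \<longleftrightarrow> xs ! i < xs ! k \<and> xs ! k < xs ! j"
    if "i < j" "j < k" "k < length xs" for i j k
    using that by simp
  then show ?thesis
    unfolding avoids132_def by (metis length_map)
qed

lemma avoids132_appendD1:
  assumes "avoids132 (xs @ ys)"
  shows "avoids132 xs"
  unfolding avoids132_def
proof clarify
  fix i j k
  assume "i < j" "j < k" "k < length xs" "xs ! i < xs ! k" "xs ! k < xs ! j"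
  then have "i < j \<and> j < k \<and> k < length (xs @ ys) \<and>
    (xs @ ys) ! i < (xs @ ys) ! k \<and> (xs @ ys) ! k < (xs @ ys) ! j"
    by (simp add: nth_append)
  then show False
    using assms unfolding avoids132_def by blast
qed

lemma avoids132_appendD2:
  assumes "avoids132 (xs @ ys)"
  shows "avoids132 ys"
  unfolding avoids132_def
proof clarify
  fix i j k
  assume "i < j" "j < k" "k < length ys" "ys ! i < ys ! k" "ys ! k < ys ! j"
  then have "length xs + i < length xs + j \<and> length xs + j < length xs + k \<and>
    length xs + k < length (xs @ ys) \<and>
    (xs @ ys) ! (length xs + i) < (xs @ ys) ! (length xs + k) \<and>
    (xs @ ys) ! (length xs + k) < (xs @ ys) ! (length xs + j)"
    by simp
  then show False
    using assms unfolding avoids132_def by blast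
qed

lemma avoids132_append_Cons_le:
  assumes "avoids132 (A @ m # B)" "x \<in> set A" "y \<in> set B" "y < m"
  shows "y \<le> x"
proof (rule ccontr)
  assume "\<not> y \<le> x"
  obtain i where i: "i < length A" "A ! i = x"
    using assms(2) by (auto simp: in_set_conv_nth)
  obtain j where j: "j < length B" "B ! j = y"
    using assms(3) by (auto simp: in_set_conv_nth)
  let ?s = "A @ m # B" and ?k = "length A + 1 + j"
  have "?s ! i = x" "?s ! length A = m" "?s ! ?k = y"
    using i j by (simp_all add: nth_append)
  then have "i < length A \<and> length A < ?k \<and> ?k < length ?s \<and>
    ?s ! i < ?s ! ?k \<and> ?s ! ?k < ?s ! length A"
    using i j assms(4) \<open>\<not> y \<le> x\<close> by simp
  then show False
    using assms(1) unfolding avoids132_def by blast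
qed

lemma avoids132_append:
  assumes "avoids132 xs" "avoids132 ys" "\<forall>x\<in>set xs. \<forall>y\<in>set ys. y < x"
  shows "avoids132 (xs @ ys)"
  unfolding avoids132_def
proof clarify
  fix i j k
  assume ijk: "i < j" "j < k" "k < length (xs @ ys)"
    and pattern: "(xs @ ys) ! i < (xs @ ys) ! k" "(xs @ ys) ! k < (xs @ ys) ! j"
  consider "k < length xs" | "length xs \<le> i" | "i < length xs" "length xs \<le> k"
    by linarith
  then show False
  proof cases
    case 1
    then have "xs ! i < xs ! k" "xs ! k < xs ! j"
      using ijk pattern by (simp_all add: nth_append)
    then show False
      using 1 ijk assms(1) unfolding avoids132_def by blast
  next
    case 2
    then have "ys ! (i - length xs) < ys ! (k - length xs)"
      "ys ! (k - length xs) < ys ! (j - length xs)"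
      using ijk pattern by (simp_all add: nth_append)
    moreover have "i - length xs < j - length xs" "j - length xs < k - length xs"
      "k - length xs < length ys"
      using 2 ijk by auto
    ultimately show False
      using assms(2) unfolding avoids132_def by blast
  next
    case 3
    then have "xs ! i \<in> set xs" "ys ! (k - length xs) \<in> set ys"
      using ijk by auto
    then have "(xs @ ys) ! k < (xs @ ys) ! i"
      using 3 assms(3) by (simp add: nth_append)
    then show False
      using pattern by simp
  qed
qed

lemma avoids132_snoc_greater:
  assumes "avoids132 xs" "\<forall>x\<in>set xs. x < m"
  shows "avoids132 (xs @ [m])"
  unfolding avoids132_def
proof clarify
  fix i j k
  assume ijk: "i < j" "j < k" "k < length (xs @ [m])"
    and pattern: "(xs @ [m]) ! i < (xs @ [m]) ! k" "(xs @ [m]) ! k < (xs @ [m]) ! j"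
  show False
  proof (cases "k < length xs")
    case True
    then show False
      using ijk pattern assms(1) unfolding avoids132_def by (auto simp: nth_append)
  next
    case False
    then have "k = length xs" "j < length xs"
      using ijk by auto
    then show False
      using pattern assms(2) nth_mem by (fastforce simp: nth_append)
  qed
qed

lemma max_join_in_S132:
  assumes "\<sigma> \<in> S132 a" "\<pi> \<in> S132 b"
  shows "max_join \<sigma> \<pi> \<in> S132 (a + b + 1)"
proof -
  have perms: "is_perm a \<sigma>" "is_perm b \<pi>" and "avoids132 \<sigma>" "avoids132 \<pi>"
    using assms by (auto simp: S132_def)
  then have "avoids132 ((map (\<lambda>x. x + length \<pi>) \<sigma> @ [length \<sigma> + length \<pi> + 1]) @ \<pi>)"
    by (intro avoids132_append avoids132_snoc_greater) (auto simp: is_perm_def)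
  then show ?thesis
    using is_perm_max_join[OF perms] by (simp add: S132_def max_join_def)
qed

lemma perm_of_tree_in_S132: "perm_of_tree T \<in> S132 (edges T)"
proof (induction T rule: ptree_snoc_induct)
  case Leaf
  show ?case
    by (simp add: S132_def is_perm_def avoids132_def)
next
  case (snoc ts t)
  then show ?case
    using max_join_in_S132[OF snoc.IH(2) snoc.IH(1)] by (simp add: ac_simps)
qed

section \<open>Bijectivity\<close>

lemma max_join_inject:
  assumes "\<forall>x\<in>set \<sigma>. x \<le> length \<sigma>" "\<forall>y\<in>set \<pi>. y \<le> length \<pi>"
    and "max_join \<sigma> \<pi> = max_join \<sigma>' \<pi>'"
  shows "\<sigma> = \<sigma>' \<and> \<pi> = \<pi>'"
proof -
  let ?N = "length \<sigma> + length \<pi> + 1"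
  have "length \<sigma>' + length \<pi>' + 1 = ?N"
    using arg_cong[OF assms(3), of length] by simp
  moreover have "?N \<notin> set (map (\<lambda>x. x + length \<pi>) \<sigma>)" "?N \<notin> set \<pi>"
    using assms(1,2) by auto
  moreover have "map (\<lambda>x. x + length \<pi>) \<sigma> @ ?N # \<pi> =
      map (\<lambda>x. x + length \<pi>') \<sigma>' @ (length \<sigma>' + length \<pi>' + 1) # \<pi>'"
    using assms(3) by (simp only: max_join_def)
  ultimately have "map (\<lambda>x. x + length \<pi>) \<sigma> = map (\<lambda>x. x + length \<pi>') \<sigma>' \<and> \<pi> = \<pi>'"
    using append_Cons_eq_iff by metis
  moreover have "inj (\<lambda>x::nat. x + length \<pi>)"
    by (simp add: inj_def)
  ultimately show ?thesis
    using inj_map_eq_map by blast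
qed

lemma perm_of_tree_bounded: "\<forall>x\<in>set (perm_of_tree T). x \<le> length (perm_of_tree T)"
  using perm_of_tree_in_S132[of T] by (auto simp: S132_def is_perm_def)

lemma perm_of_tree_inject: "perm_of_tree T = perm_of_tree T' \<Longrightarrow> T = T'"
proof (induction T arbitrary: T' rule: ptree_snoc_induct)
  case Leaf
  then show ?case
    using perm_of_tree_eq_Nil_iff[of T'] by (cases T') simp
next
  case (snoc ts t)
  obtain ts0 where T'0: "T' = Node ts0"
    by (cases T')
  have "ts0 \<noteq> []"
    using snoc.prems T'0 by (auto simp: max_join_def)
  then obtain ts' t' where T': "T' = Node (ts' @ [t'])"
    using T'0 rev_exhaust by metis
  have "perm_of_tree t = perm_of_tree t' \<and> perm_of_tree (Node ts) = perm_of_tree (Node ts')"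
    by (rule max_join_inject[OF perm_of_tree_bounded perm_of_tree_bounded])
      (use snoc.prems T' in simp)
  then have "Node ts = Node ts'" "t = t'"
    using snoc.IH by blast+
  then show ?case
    using T' by simp
qed

lemma atLeastAtMost_split_below:
  fixes X Y :: "nat set"
  assumes "X \<union> Y = {1..m}" "\<forall>x\<in>X. \<forall>y\<in>Y. y < x"
  shows "Y = {1..card Y}" "X = {card Y + 1..m}"
proof -
  have "finite Y"
    using assms(1) by (metis finite_Un finite_atLeastAtMost)
  have "y \<le> card Y" if y: "y \<in> Y" for y
  proof -
    have "{1..y} \<subseteq> Y"
    proof
      fix z
      assume z: "z \<in> {1..y}"
      have "z \<notin> X"
      proof
        assume "z \<in> X"
        then have "y < z"
          using assms(2) y by blast
        then show False
          using z by simp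
      qed
      moreover have "y \<in> {1..m}"
        using assms(1) y by blast
      ultimately show "z \<in> Y"
        using assms(1) z by auto
    qed
    then have "card {1..y} \<le> card Y"
      by (rule card_mono[OF \<open>finite Y\<close>])
    then show ?thesis
      by simp
  qed
  then have "Y \<subseteq> {1..card Y}"
    using assms(1) by auto
  then show Y: "Y = {1..card Y}"
    using card_subset_eq[of "{1..card Y}" Y] by simp
  have "X \<inter> Y = {}"
    using assms(2) less_irrefl by blast
  then have "X = {1..m} - Y"
    using assms(1) by blast
  then show "X = {card Y + 1..m}"
    by (subst (asm) Y) auto
qed

lemma S132_split_at_max:
  assumes "A @ m # B \<in> S132 m"
  shows "set A = {length B + 1..length A + length B}" "set B = {1..length B}"
proof -
  have perm: "length (A @ m # B) = m" "distinct (A @ m # B)" "set (A @ m # B) = {1..m}"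
    and avoids: "avoids132 (A @ m # B)"
    using assms by (simp_all add: S132_def is_perm_def)
  then have m: "m = length A + length B + 1"
    by simp
  have "m \<notin> set A \<union> set B" "insert m (set A \<union> set B) = {1..m}"
    using perm(2,3) by auto
  then have "set A \<union> set B = {1..m} - {m}"
    by (metis Diff_insert_absorb)
  then have AB: "set A \<union> set B = {1..length A + length B}"
    using m by (simp add: atLeastAtMostSuc_conv)
  have below: "\<forall>x\<in>set A. \<forall>y\<in>set B. y < x"
  proof (intro ballI)
    fix x y
    assume xy: "x \<in> set A" "y \<in> set B"
    have "y \<in> {1..length A + length B}"
      using AB xy(2) by blast
    then have "y \<le> x"
      using avoids132_append_Cons_le[OF avoids xy] m by simp
    moreover have "x \<noteq> y"
      using perm(2) xy by auto
    ultimately show "y < x"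
      by simp
  qed
  have "card (set B) = length B"
    using perm(2) by (simp add: distinct_card)
  then show "set A = {length B + 1..length A + length B}" "set B = {1..length B}"
    using atLeastAtMost_split_below[OF AB below] by simp_all
qed

lemma is_perm_shift_down:
  assumes "distinct xs" "set xs = {c + 1..length xs + c}"
  shows "is_perm (length xs) (map (\<lambda>x. x - c) xs)" "map (\<lambda>x. x - c + c) xs = xs"
proof -
  show "map (\<lambda>x. x - c + c) xs = xs"
    by (rule map_idI) (use assms(2) in auto)
  have "inj_on (\<lambda>x. x - c) (set xs)"
    by (rule inj_on_diff_nat) (use assms(2) in auto)
  moreover have "set (map (\<lambda>x. x - c) xs) \<subseteq> {1..length xs}"
    using assms(2) by auto
  ultimately show "is_perm (length xs) (map (\<lambda>x. x - c) xs)"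
    using is_perm_if_subset[of "map (\<lambda>x. x - c) xs"] assms(1) by (simp add: distinct_map)
qed

lemma S132_decompose:
  assumes "\<pi> \<in> S132 n" "0 < n"
  obtains \<sigma> \<rho> where "\<pi> = max_join \<sigma> \<rho>" "\<sigma> \<in> S132 (length \<sigma>)" "\<rho> \<in> S132 (length \<rho>)"
proof -
  have "n \<in> set \<pi>"
    using assms by (simp add: S132_def is_perm_def)
  then obtain A B where AB: "\<pi> = A @ n # B"
    using split_list by metis
  then have n: "n = length A + length B + 1" and distinct: "distinct A" "distinct B"
    and avoids: "avoids132 A" "avoids132 B"
    using assms(1) avoids132_appendD1[of A "n # B"] avoids132_appendD2[of "A @ [n]" B]
    by (simp_all add: S132_def is_perm_def)
  have A: "set A = {length B + 1..length A + length B}" and B: "set B = {1..length B}"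
    using S132_split_at_max assms(1) AB by blast+
  define \<sigma> where "\<sigma> = map (\<lambda>x. x - length B) A"
  have "is_perm (length A) \<sigma>" and "map (\<lambda>x. x - length B + length B) A = A"
    using is_perm_shift_down[of A "length B"] distinct(1) A by (simp_all add: \<sigma>_def add.commute)
  then have \<sigma>: "is_perm (length \<sigma>) \<sigma>" and A_\<sigma>: "A = map (\<lambda>x. x + length B) \<sigma>"
    by (simp_all add: \<sigma>_def comp_def)
  show ?thesis
  proof (rule that)
    show "\<pi> = max_join \<sigma> B"
      using AB A_\<sigma> n by (simp add: max_join_def)
    show "\<sigma> \<in> S132 (length \<sigma>)"
      using \<sigma> avoids(1) A_\<sigma> by (simp add: S132_def)
    show "B \<in> S132 (length B)"
      using B distinct(2) avoids(2) by (simp add: S132_def is_perm_def)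
  qed
qed

lemma perm_of_tree_surj: "\<pi> \<in> S132 n \<Longrightarrow> \<exists>T. perm_of_tree T = \<pi>"
proof (induction n arbitrary: \<pi> rule: less_induct)
  case (less n)
  show ?case
  proof (cases "n = 0")
    case True
    then have "\<pi> = []"
      using less.prems by (simp add: S132_def is_perm_def)
    then show ?thesis
      using perm_of_tree_Leaf by blast
  next
    case False
    then obtain \<sigma> \<rho> where \<pi>: "\<pi> = max_join \<sigma> \<rho>"
      and "\<sigma> \<in> S132 (length \<sigma>)" "\<rho> \<in> S132 (length \<rho>)"
      using S132_decompose less.prems by blast
    moreover have "length \<sigma> < n" "length \<rho> < n"
      using less.prems \<pi> by (auto simp: S132_def is_perm_def)
    ultimately obtain t ts where "perm_of_tree t = \<sigma>" "perm_of_tree (Node ts) = \<rho>"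
      using less.IH by (metis ptree.exhaust)
    then show ?thesis
      using \<pi> perm_of_tree_snoc by metis
  qed
qed

lemma bij_betw_perm_of_tree: "bij_betw perm_of_tree {T. edges T = n} (S132 n)"
  unfolding bij_betw_def
proof
  show "inj_on perm_of_tree {T. edges T = n}"
    using perm_of_tree_inject by (auto intro: inj_onI)
  show "perm_of_tree ` {T. edges T = n} = S132 n"
  proof
    show "perm_of_tree ` {T. edges T = n} \<subseteq> S132 n"
      using perm_of_tree_in_S132 by auto
    show "S132 n \<subseteq> perm_of_tree ` {T. edges T = n}"
    proof
      fix \<pi>
      assume "\<pi> \<in> S132 n"
      moreover obtain T where "perm_of_tree T = \<pi>"
        using perm_of_tree_surj[OF \<open>\<pi> \<in> S132 n\<close>] by blast
      ultimately show "\<pi> \<in> perm_of_tree ` {T. edges T = n}"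
        by (auto simp: S132_def is_perm_def)
    qed
  qed
qed

section \<open>Double descents and ascending runs\<close>

lemma card_Collect_nat_Suc:
  assumes "finite {i. P i}"
  shows "card {i. P i} = (if P 0 then 1 else 0) + card {i. P (Suc i)}"
proof -
  have "{i. P i} = (if P 0 then {0} else {}) \<union> Suc ` {i. P (Suc i)}"
    by (auto simp: image_iff) (metis not0_implies_Suc)+
  moreover have "finite (Suc ` {i. P (Suc i)})"
    by (rule finite_subset[OF _ assms]) auto
  ultimately show ?thesis
    by (simp add: card_image)
qed

fun double_descents_rec :: "nat list \<Rightarrow> nat" where
  "double_descents_rec (x # y # z # w) =
     (if y < x \<and> z < y then 1 else 0) + double_descents_rec (y # z # w)"
| "double_descents_rec _ = 0"

lemma double_descents_eq_rec: "double_descents s = double_descents_rec s"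
proof (induction s rule: double_descents_rec.induct)
  case (1 x y z w)
  let ?s = "x # y # z # w"
  have "finite {i. i + 2 < length ?s \<and> ?s ! i > ?s ! (i + 1) \<and> ?s ! (i + 1) > ?s ! (i + 2)}"
    by (rule finite_subset[of _ "{..<length ?s}"]) auto
  then show ?case
    using 1 unfolding double_descents_def by (subst card_Collect_nat_Suc) simp_all
qed (simp_all add: double_descents_def)

definition last_ascents :: "nat list \<Rightarrow> nat set" where
  "last_ascents s = {i. i + 1 < length s \<and> s ! i < s ! (i + 1) \<and>
     (i + 2 = length s \<or> \<not> s ! (i + 1) < s ! (i + 2))}"

fun asc_runs_rec :: "nat list \<Rightarrow> nat" where
  "asc_runs_rec [x, y] = (if x < y then 1 else 0)"
| "asc_runs_rec (x # y # z # w) =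
     (if x < y \<and> \<not> y < z then 1 else 0) + asc_runs_rec (y # z # w)"
| "asc_runs_rec _ = 0"

lemma card_last_ascents: "card (last_ascents s) = asc_runs_rec s"
proof (induction s rule: asc_runs_rec.induct)
  case (1 x y)
  have "last_ascents [x, y] = (if x < y then {0} else {})"
    by (auto simp: last_ascents_def)
  then show ?case
    by simp
next
  case (2 x y z w)
  have "finite (last_ascents (x # y # z # w))"
    by (rule finite_subset[of _ "{..<length (x # y # z # w)}"]) (auto simp: last_ascents_def)
  then show ?case
    using 2 unfolding last_ascents_def by (subst card_Collect_nat_Suc) simp_all
qed (auto simp: last_ascents_def)

definition is_asc_run :: "nat list \<Rightarrow> nat \<Rightarrow> nat \<Rightarrow> bool" where
  "is_asc_run s i j \<longleftrightarrow> i < j \<and> j < length s \<and>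
     (\<forall>k. i \<le> k \<and> k < j \<longrightarrow> s ! k < s ! (k+1)) \<and>
     (i = 0 \<or> \<not> s ! (i - 1) < s ! i) \<and>
     (j + 1 = length s \<or> \<not> s ! j < s ! (j+1))"

lemma is_asc_run_start_unique:
  assumes "is_asc_run s i j" "is_asc_run s i' j"
  shows "i = i'"
proof -
  have "\<not> i' < i" if "is_asc_run s i j" "is_asc_run s i' j" for i i'
  proof
    assume "i' < i"
    moreover have "i < j" "\<forall>k. i' \<le> k \<and> k < j \<longrightarrow> s ! k < s ! (k + 1)"
      using that by (simp_all add: is_asc_run_def)
    moreover have "i' \<le> i - 1" "i - 1 < j"
      using calculation by linarith+
    ultimately have "s ! (i - 1) < s ! (i - 1 + 1)"
      by blast
    then show False
      using that(1) \<open>i' < i\<close> by (simp add: is_asc_run_def)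
  qed
  then show ?thesis
    using assms by (meson linorder_neqE_nat)
qed

lemma ex_maximal_ascending_stretch:
  assumes "s ! p < s ! (p + 1)"
  shows "\<exists>i\<le>p. (\<forall>k. i \<le> k \<and> k \<le> p \<longrightarrow> s ! k < s ! (k + 1)) \<and>
    (i = 0 \<or> \<not> s ! (i - 1) < s ! i)"
  using assms
proof (induction p)
  case 0
  then show ?case
    by auto
next
  case (Suc q)
  show ?case
  proof (cases "s ! q < s ! (q + 1)")
    case True
    then obtain i where "i \<le> q" "\<forall>k. i \<le> k \<and> k \<le> q \<longrightarrow> s ! k < s ! (k + 1)"
      "i = 0 \<or> \<not> s ! (i - 1) < s ! i"
      using Suc.IH by blast
    then show ?thesis
      using Suc.prems by (intro exI[of _ i]) (auto simp: le_Suc_eq)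
  next
    case False
    then show ?thesis
      using Suc.prems by (intro exI[of _ "Suc q"]) auto
  qed
qed

lemma last_ascents_iff_asc_run:
  "p \<in> last_ascents s \<longleftrightarrow> (\<exists>i. is_asc_run s i (p + 1))"
proof
  assume p: "p \<in> last_ascents s"
  then obtain i where "i \<le> p" "\<forall>k. i \<le> k \<and> k \<le> p \<longrightarrow> s ! k < s ! (k + 1)"
    "i = 0 \<or> \<not> s ! (i - 1) < s ! i"
    using ex_maximal_ascending_stretch[of s p] by (auto simp: last_ascents_def)
  then have "is_asc_run s i (p + 1)"
    using p by (auto simp: is_asc_run_def last_ascents_def)
  then show "\<exists>i. is_asc_run s i (p + 1)" ..
next
  assume "\<exists>i. is_asc_run s i (p + 1)"
  then obtain i where "is_asc_run s i (p + 1)" ..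
  then show "p \<in> last_ascents s"
    by (auto simp: is_asc_run_def last_ascents_def)
qed

lemma asc_runs_eq_card_last_ascents: "asc_runs s = card (last_ascents s)"
proof -
  let ?R = "{(i, j). is_asc_run s i j}"
  have "inj_on (\<lambda>(i, j). j - 1) ?R"
  proof (rule inj_onI, clarify)
    fix i j i' j'
    assume runs: "is_asc_run s i j" "is_asc_run s i' j'" and "j - 1 = j' - 1"
    moreover have "0 < j" "0 < j'"
      using runs by (simp_all add: is_asc_run_def)
    ultimately have "j = j'"
      by linarith
    then show "i = i' \<and> j = j'"
      using runs is_asc_run_start_unique by blast
  qed
  moreover have "(\<lambda>(i, j). j - 1) ` ?R = last_ascents s"
  proof (intro equalityI subsetI)
    fix p
    assume "p \<in> (\<lambda>(i, j). j - 1) ` ?R"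
    then obtain i j where run: "is_asc_run s i j" and "p = j - 1"
      by auto
    then have "j = p + 1"
      by (simp add: is_asc_run_def)
    then show "p \<in> last_ascents s"
      using run last_ascents_iff_asc_run by blast
  next
    fix p
    assume "p \<in> last_ascents s"
    then obtain i where "is_asc_run s i (p + 1)"
      using last_ascents_iff_asc_run by blast
    then show "p \<in> (\<lambda>(i, j). j - 1) ` ?R"
      by (intro image_eqI[where x = "(i, p + 1)"]) auto
  qed
  ultimately show ?thesis
    unfolding asc_runs_def is_asc_run_def[symmetric] by (metis card_image)
qed

lemma double_descents_rec_append_ascent:
  assumes "\<alpha> \<noteq> []" "last \<alpha> < m"
  shows "double_descents_rec (x # \<alpha> @ m # \<gamma>) =
    double_descents_rec (x # \<alpha>) + double_descents_rec (m # \<gamma>)"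
  using assms
proof (induction \<alpha> arbitrary: x rule: list_nonempty_induct)
  case (single u)
  then show ?case
    by (cases \<gamma>) auto
next
  case (cons u \<alpha>)
  then show ?case
    by (cases \<alpha>) auto
qed

lemma double_descents_rec_Cons_sentinel:
  assumes "s \<noteq> []" "hd s < x" "hd s < y"
  shows "double_descents_rec (x # s) = double_descents_rec (y # s)"
  using assms by (cases s; cases "tl s") auto

lemma double_descents_rec_shift [simp]:
  "double_descents_rec (map (\<lambda>x. x + c) s) = double_descents_rec s"
  by (induction s rule: double_descents_rec.induct) auto

lemma double_descents_rec_max_join:
  assumes "\<forall>x\<in>set \<sigma>. x \<le> length \<sigma>" "\<forall>y\<in>set \<pi>. y \<le> length \<pi>"
  shows "double_descents_rec (Suc (length (max_join \<sigma> \<pi>)) # max_join \<sigma> \<pi>) =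
    double_descents_rec (Suc (length \<sigma>) # \<sigma>) + double_descents_rec (Suc (length \<pi>) # \<pi>) +
    (if \<sigma> = [] \<and> \<pi> \<noteq> [] then 1 else 0)"
proof -
  define a b where "a = length \<sigma>" and "b = length \<pi>"
  have "\<pi> \<noteq> [] \<Longrightarrow> hd \<pi> \<le> b"
    using assms(2) hd_in_set unfolding b_def by blast
  then have \<pi>_part: "double_descents_rec ((a + b + 1) # \<pi>) = double_descents_rec (Suc b # \<pi>)"
    by (cases "\<pi> = []") (auto intro!: double_descents_rec_Cons_sentinel)
  show ?thesis
  proof (cases "\<sigma> = []")
    case True
    then show ?thesis
      using assms(2) by (cases \<pi>) (auto simp: max_join_def b_def)
  next
    case False
    then have "last \<sigma> \<le> a" "hd \<sigma> \<le> a"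
      using assms(1) last_in_set hd_in_set unfolding a_def by blast+
    have split: "double_descents_rec (Suc (length (max_join \<sigma> \<pi>)) # max_join \<sigma> \<pi>) =
      double_descents_rec ((a + b + 2) # map (\<lambda>x. x + b) \<sigma>) +
      double_descents_rec ((a + b + 1) # \<pi>)"
      unfolding max_join_def a_def b_def
      using False \<open>last \<sigma> \<le> a\<close>
      by (subst double_descents_rec_append_ascent) (auto simp: last_map a_def)
    have "double_descents_rec ((a + b + 2) # map (\<lambda>x. x + b) \<sigma>) =
      double_descents_rec ((Suc a + b) # map (\<lambda>x. x + b) \<sigma>)"
      using False \<open>hd \<sigma> \<le> a\<close> by (auto intro!: double_descents_rec_Cons_sentinel simp: hd_map)
    also have "\<dots> = double_descents_rec (Suc a # \<sigma>)"
      using double_descents_rec_shift[of b "Suc a # \<sigma>"] by simp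
    finally show ?thesis
      using split \<pi>_part False by (simp add: a_def b_def)
  qed
qed

lemma asc_runs_rec_append_ascent:
  assumes "\<alpha> \<noteq> []" "last \<alpha> < m"
  shows "asc_runs_rec (\<alpha> @ m # \<gamma>) + (if \<gamma> \<noteq> [] \<and> m < hd \<gamma> then 1 else 0) =
    asc_runs_rec (\<alpha> @ [m]) + asc_runs_rec (m # \<gamma>)"
  using assms
proof (induction \<alpha> rule: list_nonempty_induct)
  case (single u)
  then show ?case
    by (cases \<gamma>) auto
next
  case (cons u \<alpha>)
  then obtain v \<alpha>' where "\<alpha> = v # \<alpha>'"
    by (cases \<alpha>) auto
  moreover have "hd (\<alpha>' @ m # \<gamma>) = hd (\<alpha>' @ [m])"
    by (cases \<alpha>') auto
  ultimately show ?case
    using cons by (cases "\<alpha>' @ m # \<gamma>"; cases "\<alpha>' @ [m]") auto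
qed

lemma asc_runs_rec_Cons_greater:
  assumes "s \<noteq> []" "hd s < x"
  shows "asc_runs_rec (x # s) = asc_runs_rec s"
  using assms by (cases s; cases "tl s") auto

lemma asc_runs_rec_snoc_sentinel:
  assumes "s \<noteq> []" "last s < x" "last s < y"
  shows "asc_runs_rec (s @ [x]) = asc_runs_rec (s @ [y])"
  using assms
proof (induction s rule: list_nonempty_induct)
  case (cons u s)
  then show ?case
    by (cases s; cases "tl s") auto
qed simp

lemma asc_runs_rec_shift [simp]: "asc_runs_rec (map (\<lambda>x. x + c) s) = asc_runs_rec s"
  by (induction s rule: asc_runs_rec.induct) auto

lemma asc_runs_rec_max_join:
  assumes "\<forall>x\<in>set \<sigma>. x \<le> length \<sigma>" "\<forall>y\<in>set \<pi>. y \<le> length \<pi>"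
  shows "asc_runs_rec (max_join \<sigma> \<pi> @ [Suc (length (max_join \<sigma> \<pi>))]) =
    asc_runs_rec (\<sigma> @ [Suc (length \<sigma>)]) + asc_runs_rec (\<pi> @ [Suc (length \<pi>)]) +
    (if \<sigma> = [] \<and> \<pi> = [] then 1 else 0)"
proof -
  define a b where "a = length \<sigma>" and "b = length \<pi>"
  have "\<pi> \<noteq> [] \<Longrightarrow> hd \<pi> \<le> b" "\<pi> \<noteq> [] \<Longrightarrow> last \<pi> \<le> b"
    using assms(2) hd_in_set last_in_set unfolding b_def by blast+
  then have \<pi>_part: "asc_runs_rec ((a + b + 1) # \<pi> @ [a + b + 2]) =
    asc_runs_rec (\<pi> @ [Suc b]) + (if \<pi> = [] then 1 else 0)"
    by (cases "\<pi> = []")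
      (auto simp: asc_runs_rec_Cons_greater intro!: asc_runs_rec_snoc_sentinel)
  show ?thesis
  proof (cases "\<sigma> = []")
    case True
    then show ?thesis
      using \<pi>_part by (simp add: max_join_def a_def b_def)
  next
    case False
    then have "last \<sigma> \<le> a"
      using assms(1) last_in_set unfolding a_def by blast
    then have "asc_runs_rec (map (\<lambda>x. x + b) \<sigma> @ (a + b + 1) # \<pi> @ [a + b + 2]) +
        (if \<pi> = [] then 1 else 0) =
      asc_runs_rec (map (\<lambda>x. x + b) \<sigma> @ [a + b + 1]) + asc_runs_rec ((a + b + 1) # \<pi> @ [a + b + 2])"
      using asc_runs_rec_append_ascent[of "map (\<lambda>x. x + b) \<sigma>" "a + b + 1" "\<pi> @ [a + b + 2]"]
        False \<open>\<pi> \<noteq> [] \<Longrightarrow> hd \<pi> \<le> b\<close>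
      by (auto simp: last_map)
    moreover have "asc_runs_rec (map (\<lambda>x. x + b) \<sigma> @ [a + b + 1]) = asc_runs_rec (\<sigma> @ [Suc a])"
      using asc_runs_rec_shift[of b "\<sigma> @ [Suc a]"] by simp
    ultimately show ?thesis
      using \<pi>_part False by (simp add: max_join_def a_def b_def)
  qed
qed

section \<open>Leaves\<close>

lemma young_leaves_snoc:
  "young_leaves (Node (ts @ [t])) =
    young_leaves (Node ts) + young_leaves t + (if ts \<noteq> [] \<and> children t = [] then 1 else 0)"
  by (cases ts) auto

lemma old_leaves_snoc:
  "old_leaves (Node (ts @ [t])) =
    old_leaves (Node ts) + old_leaves t + (if ts = [] \<and> children t = [] then 1 else 0)"
  by (cases ts) auto

lemma young_leaves_eq_double_descents_rec:
  "young_leaves T = double_descents_rec (Suc (length (perm_of_tree T)) # perm_of_tree T)"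
proof (induction T rule: ptree_snoc_induct)
  case Leaf
  then show ?case
    by simp
next
  case (snoc ts t)
  then show ?case
    using double_descents_rec_max_join[OF perm_of_tree_bounded perm_of_tree_bounded]
      perm_of_tree_eq_Nil_iff[of t] perm_of_tree_eq_Nil_iff[of "Node ts"]
    by (simp only: young_leaves_snoc perm_of_tree_snoc children.simps) (simp add: ac_simps)
qed

lemma old_leaves_eq_asc_runs_rec:
  "old_leaves T = asc_runs_rec (perm_of_tree T @ [Suc (length (perm_of_tree T))])"
proof (induction T rule: ptree_snoc_induct)
  case Leaf
  then show ?case
    by simp
next
  case (snoc ts t)
  then show ?case
    using asc_runs_rec_max_join[OF perm_of_tree_bounded perm_of_tree_bounded]
      perm_of_tree_eq_Nil_iff[of t] perm_of_tree_eq_Nil_iff[of "Node ts"]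
    by (simp only: old_leaves_snoc perm_of_tree_snoc children.simps) (simp add: ac_simps)
qed

theorem mainTheorem11:
  fixes n :: nat
  assumes "n \<ge> 1"
  shows "\<exists>\<psi>. bij_betw \<psi> {T. edges T = n} (S132 n) \<and>
    (\<forall>T. edges T = n \<longrightarrow>
       young_leaves T = double_descents ((n+1) # \<psi> T) \<and>
       old_leaves T = asc_runs (\<psi> T @ [n+1]))"
proof (intro exI conjI allI impI)
  show "bij_betw perm_of_tree {T. edges T = n} (S132 n)"
    by (rule bij_betw_perm_of_tree)
next
  fix T
  assume "edges T = n"
  then have n: "n + 1 = Suc (length (perm_of_tree T))"
    by simp
  show "young_leaves T = double_descents ((n + 1) # perm_of_tree T)"
    unfolding n double_descents_eq_rec by (rule young_leaves_eq_double_descents_rec)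
  show "old_leaves T = asc_runs (perm_of_tree T @ [n + 1])"
    unfolding n asc_runs_eq_card_last_ascents card_last_ascents
    by (rule old_leaves_eq_asc_runs_rec)
qed

end
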